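(* Let $0<\mu\le L$, $\kappa=L/\mu$, and $0<\sigma<1$. For $\eta>0$ define $$G(\eta)=\begin{bmatrix}\sigma+\eta\frac{L}{\mu} & \frac{\eta}{\mu} & \eta\frac{L}{\mu}\\ 2L+\eta\frac{L^2}{\mu} & \sigma+\eta\frac{L}{\mu} & \eta\frac{L^2}{\mu}\\ \eta\frac{L}{\mu} & \frac{\eta}{\mu} & 1-\eta\frac{\mu}{L}\end{bmatrix}.$$ If $0<\eta<\bar\eta=\dfrac{(1-\sigma)^2}{2(2-\sigma)(\kappa+\kappa^3)}$, then the spectral radius satisfies $\rho(G(\eta))<1$.
   Context: In the paper, $\mu$ and $L$ are the strong convexity and smoothness constants of the local cost functions ($\mu I\preceq\nabla^2 f_i\preceq LI$), $\sigma=\|W-\frac1N\mathbf{1}\mathbf{1}^T\|_2$ is the spectral norm associated with a symmetric doubly stochastic consensus matrix $W$ of a connected graph, and $G(\eta)$ is the matrix governing the Network-GIANT error recursion (consensus error, gradient-tracking error, optimality gap). $\rho(\cdot)$ denotes the spectral radius. *)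

theory Defs
  imports "Jordan_Normal_Form.Spectral_Radius"
begin

definition G_mat :: "real \<Rightarrow> real \<Rightarrow> real \<Rightarrow> real \<Rightarrow> real mat" where
  "G_mat \<mu> L \<sigma> \<eta> = mat_of_rows_list 3
     [[\<sigma> + \<eta> * L / \<mu>,        \<eta> / \<mu>,           \<eta> * L / \<mu>],
      [2 * L + \<eta> * L^2 / \<mu>,  \<sigma> + \<eta> * L / \<mu>,  \<eta> * L^2 / \<mu>],
      [\<eta> * L / \<mu>,            \<eta> / \<mu>,           1 - \<eta> * \<mu> / L]]"

definition G_cmat :: "real \<Rightarrow> real \<Rightarrow> real \<Rightarrow> real \<Rightarrow> complex mat" where
  "G_cmat \<mu> L \<sigma> \<eta> = map_mat complex_of_real (G_mat \<mu> L \<sigma> \<eta>)"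

end

theory Submission
  imports Defs
begin

(* The spectral radius is bounded by every weighted maximum row sum
   max_i (SUM j. |a_ij| w_j) / w_i with positive weights w: at a coordinate where
   |v_i| / w_i is maximal, the eigen-equation of an eigenvector v forces |lambda| below it.
   For G(eta) take w = (1 - sigma, L (3 - sigma), z) and kappa = L / mu.  The first two
   rows are strictly below w_i iff eta kappa (2 (2 - sigma) + z) < (1 - sigma)^2, the third
   iff z > 2 (2 - sigma) kappa^2, and such a z exists iff
   eta kappa 2 (2 - sigma) (1 + kappa^2) < (1 - sigma)^2, which is the bound on eta. *)

lemma norm_eigenvalue_lt_1_if_weighted_row_sums_lt:
  fixes A :: "complex mat" and w :: "nat \<Rightarrow> real"
  assumes A: "A \<in> carrier_mat n n"
    and w_pos: "\<forall>i<n. 0 < w i"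
    and rows: "\<forall>i<n. (\<Sum>j<n. cmod (A $$ (i, j)) * w j) < w i"
    and ev: "eigenvector A v lam"
  shows "cmod lam < 1"
proof -
  have v: "v \<in> carrier_vec n" "v \<noteq> 0\<^sub>v n" "A *\<^sub>v v = lam \<cdot>\<^sub>v v"
    using ev A unfolding eigenvector_def by auto
  obtain i0 where i0: "i0 < n" "v $ i0 \<noteq> 0"
    using v(1,2) by (metis carrier_vecD eq_vecI index_zero_vec)
  define r where "r j = cmod (v $ j) / w j" for j
  define M where "M = Max (r ` {..<n})"
  have r_le: "r j \<le> M" if "j < n" for j
    unfolding M_def using that by (intro Max_ge) auto
  obtain i where i: "i < n" "r i = M"
    using Max_in[of "r ` {..<n}"] i0(1) unfolding M_def by fastforce
  have "0 < r i0" unfolding r_def using i0 w_pos by auto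
  hence M_pos: "0 < M" using r_le[OF i0(1)] by linarith
  have v_le: "cmod (v $ j) \<le> M * w j" if "j < n" for j
    using r_le[OF that] w_pos that unfolding r_def by (simp add: divide_le_eq)
  have v_i: "cmod (v $ i) = M * w i"
    using i w_pos unfolding r_def by (auto simp: divide_eq_eq)
  have "lam * v $ i = (\<Sum>j<n. A $$ (i, j) * v $ j)"
    using arg_cong[OF v(3), of "\<lambda>u. u $ i"] A v(1) i(1)
    by (simp add: scalar_prod_def lessThan_atLeast0)
  hence "cmod lam * (M * w i) = cmod (\<Sum>j<n. A $$ (i, j) * v $ j)"
    by (metis norm_mult v_i)
  also have "\<dots> \<le> (\<Sum>j<n. cmod (A $$ (i, j)) * cmod (v $ j))"
    by (rule order_trans[OF norm_sum]) (simp add: norm_mult)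
  also have "\<dots> \<le> (\<Sum>j<n. cmod (A $$ (i, j)) * (M * w j))"
    using v_le by (intro sum_mono mult_left_mono) auto
  also have "\<dots> = M * (\<Sum>j<n. cmod (A $$ (i, j)) * w j)"
    by (simp add: sum_distrib_left algebra_simps)
  also have "\<dots> < M * w i"
    using rows i(1) M_pos by simp
  finally show ?thesis
    using M_pos w_pos i(1) by simp
qed

lemma spectral_radius_lt_1_if_weighted_row_sums_lt:
  fixes A :: "complex mat" and w :: "nat \<Rightarrow> real"
  assumes A: "A \<in> carrier_mat n n" and "0 < n"
    and "\<forall>i<n. 0 < w i"
    and "\<forall>i<n. (\<Sum>j<n. cmod (A $$ (i, j)) * w j) < w i"
  shows "spectral_radius A < 1"
proof -
  obtain lam where "lam \<in> spectrum A" "spectral_radius A = cmod lam"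
    using spectral_radius_mem_max(1)[OF A \<open>0 < n\<close>] by auto
  then show ?thesis
    using norm_eigenvalue_lt_1_if_weighted_row_sums_lt[OF A] assms(3,4)
    unfolding spectrum_def eigenvalue_def by auto
qed

lemma G_mat_carrier: "G_mat \<mu> L \<sigma> \<eta> \<in> carrier_mat 3 3"
  unfolding G_mat_def mat_of_rows_list_def using mat_carrier[of 3 3] by (simp add: numeral_3_eq_3)

lemma G_cmat_carrier: "G_cmat \<mu> L \<sigma> \<eta> \<in> carrier_mat 3 3"
  unfolding G_cmat_def using G_mat_carrier by simp

lemma G_cmat_index:
  "i < 3 \<Longrightarrow> j < 3 \<Longrightarrow> G_cmat \<mu> L \<sigma> \<eta> $$ (i, j) = complex_of_real (G_mat \<mu> L \<sigma> \<eta> $$ (i, j))"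
  unfolding G_cmat_def using G_mat_carrier[of \<mu> L \<sigma> \<eta>] by auto

lemma G_mat_index:
  "G_mat \<mu> L \<sigma> \<eta> $$ (0, 0) = \<sigma> + \<eta> * L / \<mu>"
  "G_mat \<mu> L \<sigma> \<eta> $$ (0, 1) = \<eta> / \<mu>"
  "G_mat \<mu> L \<sigma> \<eta> $$ (0, 2) = \<eta> * L / \<mu>"
  "G_mat \<mu> L \<sigma> \<eta> $$ (1, 0) = 2 * L + \<eta> * L^2 / \<mu>"
  "G_mat \<mu> L \<sigma> \<eta> $$ (1, 1) = \<sigma> + \<eta> * L / \<mu>"
  "G_mat \<mu> L \<sigma> \<eta> $$ (1, 2) = \<eta> * L^2 / \<mu>"
  "G_mat \<mu> L \<sigma> \<eta> $$ (2, 0) = \<eta> * L / \<mu>"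
  "G_mat \<mu> L \<sigma> \<eta> $$ (2, 1) = \<eta> / \<mu>"
  "G_mat \<mu> L \<sigma> \<eta> $$ (2, 2) = 1 - \<eta> * \<mu> / L"
  unfolding G_mat_def mat_of_rows_list_def by (subst index_mat; simp)+

lemma less_3_cases: "(i::nat) < 3 \<longleftrightarrow> i = 0 \<or> i = 1 \<or> i = 2"
  by auto

lemma sum_lessThan_3: "(\<Sum>j<(3::nat). f j) = f 0 + f 1 + (f 2 :: 'a :: comm_monoid_add)"
  by (simp add: eval_nat_numeral lessThan_Suc ac_simps)

lemma G_mat_nonneg:
  assumes "0 < \<mu>" "0 < L" "0 \<le> \<sigma>" "0 \<le> \<eta>" "\<eta> \<le> L / \<mu>"
  shows "\<forall>i<3. \<forall>j<3. 0 \<le> G_mat \<mu> L \<sigma> \<eta> $$ (i, j)"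
proof -
  have "\<eta> * \<mu> / L \<le> 1"
    using assms by (simp add: field_simps)
  then show ?thesis
    using assms unfolding less_3_cases
    by (auto simp: G_mat_index G_mat_index[unfolded One_nat_def])
qed

lemma G_mat_weighted_row_sums_lt:
  fixes \<mu> L \<sigma> \<eta> z :: real
  defines "k \<equiv> L / \<mu>"
    and "w \<equiv> \<lambda>j. [1 - \<sigma>, L * (3 - \<sigma>), z] ! j"
  assumes "0 < \<mu>" "0 < L" "0 < \<eta>"
    and z_lower: "2 * (2 - \<sigma>) * k^2 < z"
    and z_upper: "\<eta> * k * (2 * (2 - \<sigma>) + z) < (1 - \<sigma>)^2"
  shows "\<forall>i<3. (\<Sum>j<3. G_mat \<mu> L \<sigma> \<eta> $$ (i, j) * w j) < w i"
proof -
  define a where "a = \<eta> * k"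
  have k_pos: "0 < k" unfolding k_def using assms by simp
  note G = G_mat_index G_mat_index[unfolded One_nat_def]
  have "(\<Sum>j<3. G_mat \<mu> L \<sigma> \<eta> $$ (0, j) * w j)
      = (1 - \<sigma>) - (1 - \<sigma>)^2 + a * (2 * (2 - \<sigma>) + z)"
    unfolding sum_lessThan_3 w_def using assms
    by (simp add: G a_def k_def field_simps power2_eq_square)
  moreover have "(\<Sum>j<3. G_mat \<mu> L \<sigma> \<eta> $$ (1, j) * w j)
      = L * ((3 - \<sigma>) - (1 - \<sigma>)^2 + a * (2 * (2 - \<sigma>) + z))"
    unfolding sum_lessThan_3 w_def using assms
    by (simp add: G a_def k_def field_simps power2_eq_square)
  moreover have "(\<Sum>j<3. G_mat \<mu> L \<sigma> \<eta> $$ (2, j) * w j)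
      = z - (\<eta> / k * z - a * (2 * (2 - \<sigma>)))"
    unfolding sum_lessThan_3 w_def using assms
    by (simp add: G a_def k_def field_simps)
  moreover have "a * (2 * (2 - \<sigma>)) = \<eta> / k * (2 * (2 - \<sigma>) * k^2)"
    unfolding a_def using k_pos by (simp add: power2_eq_square)
  moreover have "\<eta> / k * (2 * (2 - \<sigma>) * k^2) < \<eta> / k * z"
    using z_lower k_pos assms(5) by (intro mult_strict_left_mono) auto
  ultimately show ?thesis
    using z_upper assms unfolding less_3_cases a_def by (auto simp: w_def)
qed

lemma step_size_bound_admits_weight:
  fixes k \<sigma> \<eta> :: real
  assumes k: "1 \<le> k" and \<sigma>: "0 < \<sigma>" "\<sigma> < 1" and \<eta>: "0 < \<eta>"
    and step: "\<eta> < (1 - \<sigma>)^2 / (2 * (2 - \<sigma>) * (k + k^3))"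
  shows "\<eta> \<le> k"
    and "\<exists>z. 2 * (2 - \<sigma>) * k^2 < z \<and> \<eta> * k * (2 * (2 - \<sigma>) + z) < (1 - \<sigma>)^2"
proof -
  have "0 < 2 * (2 - \<sigma>) * (k + k^3)"
    using k \<sigma> by (simp add: add_pos_pos)
  with step have "\<eta> * (2 * (2 - \<sigma>) * (k + k^3)) < (1 - \<sigma>)^2"
    by (simp add: pos_less_divide_eq)
  then have scaled: "\<eta> * k * (2 * (2 - \<sigma>)) * (1 + k^2) < (1 - \<sigma>)^2"
    by (simp add: algebra_simps power2_eq_square power3_eq_cube)
  have "1 \<le> k * (2 * (2 - \<sigma>)) * (1 + k^2)"
    using k \<sigma> by (simp add: mult_ge1_I)
  then have "\<eta> \<le> \<eta> * k * (2 * (2 - \<sigma>)) * (1 + k^2)"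
    using mult_left_mono[of 1 _ \<eta>] \<eta> by (simp add: mult.assoc)
  also have "\<dots> < 1"
    using scaled \<sigma> power_strict_mono[of "1 - \<sigma>" 1 2] by simp
  finally show "\<eta> \<le> k" using k by simp
  have "2 * (2 - \<sigma>) * k^2 < (1 - \<sigma>)^2 / (\<eta> * k) - 2 * (2 - \<sigma>)"
    using scaled k \<eta> by (simp add: field_simps)
  then obtain z where z: "2 * (2 - \<sigma>) * k^2 < z" "z < (1 - \<sigma>)^2 / (\<eta> * k) - 2 * (2 - \<sigma>)"
    using dense by blast
  moreover have "\<eta> * k * (2 * (2 - \<sigma>) + z) < (1 - \<sigma>)^2"
    using z(2) k \<eta> by (simp add: field_simps)
  ultimately show "\<exists>z. 2 * (2 - \<sigma>) * k^2 < z \<and> \<eta> * k * (2 * (2 - \<sigma>) + z) < (1 - \<sigma>)^2"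
    by blast
qed

theorem theorem2:
  fixes \<mu> L \<sigma> \<eta> :: real
  assumes "0 < \<mu>" and "\<mu> \<le> L"
    and "0 < \<sigma>" and "\<sigma> < 1"
    and "0 < \<eta>"
    and "\<eta> < (1 - \<sigma>)^2 / (2 * (2 - \<sigma>) * (L / \<mu> + (L / \<mu>)^3))"
  shows "spectral_radius (G_cmat \<mu> L \<sigma> \<eta>) < 1"
proof -
  have L_pos: "0 < L" using assms(1,2) by simp
  have k: "1 \<le> L / \<mu>" using assms(1,2) by simp
  note step_size = step_size_bound_admits_weight[OF k assms(3-6)]
  obtain z where z: "2 * (2 - \<sigma>) * (L / \<mu>)^2 < z" "\<eta> * (L / \<mu>) * (2 * (2 - \<sigma>) + z) < (1 - \<sigma>)^2"
    using step_size(2) by blast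
  define w where "w = (\<lambda>j. [1 - \<sigma>, L * (3 - \<sigma>), z] ! j)"
  have "0 < z"
    by (rule le_less_trans[OF _ z(1)]) (use assms(4) in simp)
  then have w_pos: "\<forall>i<3. 0 < w i"
    using assms(4) L_pos unfolding less_3_cases w_def by auto
  have rows: "\<forall>i<3. (\<Sum>j<3. G_mat \<mu> L \<sigma> \<eta> $$ (i, j) * w j) < w i"
    using G_mat_weighted_row_sums_lt[OF assms(1) L_pos assms(5)] z unfolding w_def by blast
  have "\<forall>i<3. \<forall>j<3. 0 \<le> G_mat \<mu> L \<sigma> \<eta> $$ (i, j)"
    using G_mat_nonneg step_size(1) assms L_pos by simp
  with rows have "\<forall>i<3. (\<Sum>j<3. cmod (G_cmat \<mu> L \<sigma> \<eta> $$ (i, j)) * w j) < w i"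
    by (simp add: G_cmat_index)
  then show ?thesis
    using spectral_radius_lt_1_if_weighted_row_sums_lt[OF G_cmat_carrier _ w_pos] by simp
qed

end
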